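(* Let $(\mathsf{X},\mu)$, $(\mathsf{Y},\nu)$ be Polish probability spaces (with $d$ a metric on $\mathsf{X}$), $c:\mathsf{X}\times\mathsf{Y}\to[0,\infty)$ continuous, $\pi_\varepsilon$ the $(c,\varepsilon)$-cyclically invariant coupling for each $\varepsilon>0$ (assumed to exist), and assume $\pi_\varepsilon\to\pi_*$ weakly as $\varepsilon\to0$ for some $\pi_*\in\Pi(\mu,\nu)$. Let $\Gamma:=\operatorname{spt}\pi_*$, $\mathsf{X}_0:=\operatorname{proj}_{\mathsf{X}}\Gamma$, $\mathsf{Y}_0:=\operatorname{proj}_{\mathsf{Y}}\Gamma$. Assume: (a) $\Gamma=\operatorname{graph}T$ for a map $T:\mathsf{X}_0\to\mathsf{Y}$; (b) $\mathsf{X}_0$ is arcwise connected, i.e., any two points are connected by a continuous curve in $\mathsf{X}_0$ of finite length; (c) for every compact $K\subset\mathsf{X}_0$, uniformly over $x_1,x_2\in K$, $$|c(x_1,T(x_1))+c(x_2,T(x_2))-c(x_1,T(x_2))-c(x_2,T(x_1))|=o(d(x_1,x_2)).$$ If $(x,y),(x',y')\in\mathsf{X}_0\times\mathsf{Y}_0$ are such that $(x',y),(x,y')\in\Gamma$, then $$I(x,y)+I(x',y')\ge c(x,y)+c(x',y')-c(x,y')-c(x',y).$$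
   Context: $\Pi(\mu,\nu)$ is the set of couplings of $\mu,\nu$ and $P:=\mu\otimes\nu$. A coupling $\pi$ is $(c,\varepsilon)$-cyclically invariant if $\pi\sim P$ and its density admits a version $\frac{d\pi}{dP}:\mathsf{X}\times\mathsf{Y}\to(0,\infty)$ with $\prod_{i=1}^k\frac{d\pi}{dP}(x_i,y_i)=\exp\big(-\frac1\varepsilon[\sum_{i=1}^k c(x_i,y_i)-\sum_{i=1}^k c(x_i,y_{i+1})]\big)\prod_{i=1}^k\frac{d\pi}{dP}(x_i,y_{i+1})$ for all $k$ and points, $y_{k+1}:=y_1$. The function $I$ is $I(x,y):=\sup_{k\ge2}\sup_{(x_i,y_i)_{i=2}^k\subset\Gamma}\sup_{\sigma\in\Sigma(k)}\sum_{i=1}^k c(x_i,y_i)-\sum_{i=1}^k c(x_i,y_{\sigma(i)})$ with $(x_1,y_1):=(x,y)$ and $\Sigma(k)$ the permutations of $\{1,\dots,k\}$. *)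

theory Defs
  imports "HOL-Probability.Probability"
begin

definition couplings :: "'x::topological_space measure \<Rightarrow> 'y::topological_space measure \<Rightarrow> ('x \<times> 'y) measure set" where
  "couplings \<mu> \<nu> = {\<pi>. prob_space \<pi> \<and> sets \<pi> = sets (borel :: ('x \<times> 'y) measure)
      \<and> distr \<pi> \<mu> fst = \<mu> \<and> distr \<pi> \<nu> snd = \<nu>}"

definition cyc_invariant ::
  "('x \<Rightarrow> 'y \<Rightarrow> real) \<Rightarrow> real \<Rightarrow> 'x measure \<Rightarrow> 'y measure \<Rightarrow> ('x \<times> 'y) measure \<Rightarrow> bool" where
  "cyc_invariant c \<epsilon> \<mu> \<nu> \<pi> \<longleftrightarrow>
     absolutely_continuous (\<mu> \<Otimes>\<^sub>M \<nu>) \<pi> \<and> absolutely_continuous \<pi> (\<mu> \<Otimes>\<^sub>M \<nu>) \<and>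
     (\<exists>f :: 'x \<times> 'y \<Rightarrow> real. f \<in> borel_measurable (\<mu> \<Otimes>\<^sub>M \<nu>) \<and> (\<forall>z. f z > 0) \<and>
        \<pi> = density (\<mu> \<Otimes>\<^sub>M \<nu>) (\<lambda>z. ennreal (f z)) \<and>
        (\<forall>k::nat. \<forall>xs :: nat \<Rightarrow> 'x. \<forall>ys :: nat \<Rightarrow> 'y. k \<ge> 1 \<longrightarrow>
            (\<Prod>i<k. f (xs i, ys i)) =
            exp (- (1 / \<epsilon>) * ((\<Sum>i<k. c (xs i) (ys i)) - (\<Sum>i<k. c (xs i) (ys (Suc i mod k)))))
              * (\<Prod>i<k. f (xs i, ys (Suc i mod k)))))"

definition weak_conv_at0 :: "(real \<Rightarrow> 'a::topological_space measure) \<Rightarrow> 'a measure \<Rightarrow> bool" where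
  "weak_conv_at0 P Q \<longleftrightarrow>
     (\<forall>g :: 'a \<Rightarrow> real. continuous_on UNIV g \<and> bounded (range g) \<longrightarrow>
        ((\<lambda>\<epsilon>. \<integral>z. g z \<partial>P \<epsilon>) \<longlongrightarrow> (\<integral>z. g z \<partial>Q)) (at_right 0))"

definition spt :: "'a::topological_space measure \<Rightarrow> 'a set" where
  "spt M = {z. \<forall>U. open U \<and> z \<in> U \<longrightarrow> emeasure M U > 0}"

definition finite_length :: "(real \<Rightarrow> 'a::metric_space) \<Rightarrow> bool" where
  "finite_length g \<longleftrightarrow> (\<exists>B. \<forall>n::nat. \<forall>t :: nat \<Rightarrow> real.
      t 0 = 0 \<and> t n = 1 \<and> (\<forall>i<n. t i \<le> t (Suc i)) \<longrightarrow>
      (\<Sum>i<n. dist (g (t i)) (g (t (Suc i)))) \<le> B)"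

text \<open>The function I (extended-real valued; the supremum may be infinite).
  Points are indexed 1..k, with (x_1,y_1) = (x,y) and (x_i,y_i) in Gamma for i = 2..k.\<close>
definition Ifun :: "('x \<Rightarrow> 'y \<Rightarrow> real) \<Rightarrow> ('x \<times> 'y) set \<Rightarrow> 'x \<Rightarrow> 'y \<Rightarrow> ereal" where
  "Ifun c \<Gamma> x y = (SUP s \<in> {s. \<exists>k::nat. \<exists>xs ys \<sigma>. k \<ge> 2 \<and> xs 1 = x \<and> ys 1 = y \<and>
        (\<forall>i\<in>{2..k}. (xs i, ys i) \<in> \<Gamma>) \<and> \<sigma> permutes {1..k} \<and>
        s = (\<Sum>i=1..k. c (xs i) (ys i)) - (\<Sum>i=1..k. c (xs i) (ys (\<sigma> i)))}. ereal s)"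

end

(* Since Gamma is the graph of T, y = T x' and y' = T x.  Join x to x' by a finite-length
   path in X0 and sample it finely: x = z_0, ..., z_n = x'.  Pairing x with T x' and then
   running through the graph points (z_j, T z_j), 0 < j < n, with the y's shifted cyclically is
   admissible in the supremum defining I(x, T x'); the same chain run backwards is admissible
   for I(x', T x).  The two gains add up to the right-hand side plus the sum of the local
   quantities c(z_j,Tz_j) + c(z_j+1,Tz_j+1) - c(z_j,Tz_j+1) - c(z_j+1,Tz_j), each of which is
   at least -e d(z_j, z_j+1) by (c) once the mesh is fine.  Hence the error is at most e times
   the length of the path, and e > 0 is arbitrary. *)

theory Submission
  imports Defs
begin

definition cyclic_shift :: "nat \<Rightarrow> nat \<Rightarrow> nat" where
  "cyclic_shift n i = (if i \<in> {1..n} then (if i < n then Suc i else 1) else i)"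

lemma cyclic_shift_permutes: "cyclic_shift n permutes {1..n}"
proof (rule bij_imp_permutes)
  show "bij_betw (cyclic_shift n) {1..n} {1..n}"
    by (rule bij_betw_byWitness[where f'="\<lambda>i. if 1 < i then i - 1 else n"])
      (auto simp: cyclic_shift_def)
qed (auto simp: cyclic_shift_def)

definition chain_gain :: "('x \<Rightarrow> 'y \<Rightarrow> real) \<Rightarrow> (nat \<Rightarrow> 'x) \<Rightarrow> (nat \<Rightarrow> 'y) \<Rightarrow> nat \<Rightarrow> real" where
  "chain_gain c z w n =
     c (z 0) (w n) + (\<Sum>j=1..<n. c (z j) (w j)) - (\<Sum>j<n. c (z j) (w (Suc j)))"

lemma chain_gain_le_Ifun:
  assumes n: "2 \<le> n" and on_\<Gamma>: "\<And>i. 1 \<le> i \<Longrightarrow> i < n \<Longrightarrow> (z i, w i) \<in> \<Gamma>"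
  shows "ereal (chain_gain c z w n) \<le> Ifun c \<Gamma> (z 0) (w n)"
proof -
  define xs where "xs = (\<lambda>i. z (i - 1))"
  define ys where "ys = (\<lambda>i. if i = 1 then w n else w (i - 1))"
  have "(\<Sum>i=1..n. c (xs i) (ys i)) = c (xs 1) (ys 1) + (\<Sum>i=Suc 1..n. c (xs i) (ys i))"
    using n by (simp add: sum.atLeast_Suc_atMost)
  also have "(\<Sum>i=Suc 1..n. c (xs i) (ys i)) = (\<Sum>j=1..<n. c (z j) (w j))"
    by (rule sum.reindex_bij_witness[of _ "\<lambda>j. j + 1" "\<lambda>i. i - 1"]) (auto simp: xs_def ys_def)
  finally have diagonal: "(\<Sum>i=1..n. c (xs i) (ys i)) = c (z 0) (w n) + (\<Sum>j=1..<n. c (z j) (w j))"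
    by (simp add: xs_def ys_def)
  have shifted: "(\<Sum>i=1..n. c (xs i) (ys (cyclic_shift n i))) = (\<Sum>j<n. c (z j) (w (Suc j)))"
    by (rule sum.reindex_bij_witness[of _ "\<lambda>j. j + 1" "\<lambda>i. i - 1"])
      (auto simp: xs_def ys_def cyclic_shift_def)
  have "\<forall>i\<in>{2..n}. (xs i, ys i) \<in> \<Gamma>"
    using on_\<Gamma> by (auto simp: xs_def ys_def)
  then have "chain_gain c z w n \<in> {s. \<exists>k::nat. \<exists>xs ys \<sigma>. k \<ge> 2 \<and> xs 1 = z 0 \<and> ys 1 = w n \<and>
        (\<forall>i\<in>{2..k}. (xs i, ys i) \<in> \<Gamma>) \<and> \<sigma> permutes {1..k} \<and>
        s = (\<Sum>i=1..k. c (xs i) (ys i)) - (\<Sum>i=1..k. c (xs i) (ys (\<sigma> i)))}"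
    using n diagonal shifted cyclic_shift_permutes unfolding chain_gain_def
    by (intro CollectI exI[of _ n] exI[of _ xs] exI[of _ ys] exI[of _ "cyclic_shift n"])
      (auto simp: xs_def ys_def)
  then show ?thesis
    unfolding Ifun_def by (rule SUP_upper)
qed

lemma chain_gain_add_reverse:
  assumes "1 \<le> n"
  shows "chain_gain c z w n + chain_gain c (\<lambda>j. z (n - j)) (\<lambda>j. w (n - j)) n =
           c (z 0) (w n) + c (z n) (w 0) - c (z 0) (w 0) - c (z n) (w n)
         + (\<Sum>j<n. c (z j) (w j) + c (z (Suc j)) (w (Suc j)) - c (z j) (w (Suc j)) - c (z (Suc j)) (w j))"
proof -
  define a where "a i j = c (z i) (w j)" for i j
  have "(\<Sum>j=1..<n. a (n - j) (n - j)) = (\<Sum>j=1..<n. a j j)"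
    by (subst sum.atLeastLessThan_rev) (auto intro: sum.cong)
  moreover have "(\<Sum>j<n. a (n - j) (n - Suc j)) = (\<Sum>j<n. a (Suc j) j)"
    using sum.nat_diff_reindex[of "\<lambda>j. a (Suc j) j" n] by (simp add: Suc_diff_Suc)
  moreover have "(\<Sum>j<n. a (Suc j) (Suc j)) = (\<Sum>j=1..<n. a j j) + a n n"
    using assms sum.shift_bounds_Suc_ivl[of "\<lambda>j. a j j" 0 n, symmetric]
    by (simp add: atLeast0LessThan)
  moreover have "(\<Sum>j<n. a j j) = a 0 0 + (\<Sum>j=1..<n. a j j)"
    using assms by (simp add: sum.atLeast_Suc_lessThan flip: atLeast0LessThan)
  ultimately show ?thesis
    unfolding chain_gain_def a_def[symmetric] by (simp add: sum.distrib sum_subtractf)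
qed

lemma finite_length_uniform_partition:
  assumes "finite_length g"
  obtains B where "\<And>n::nat. 1 \<le> n \<Longrightarrow> (\<Sum>j<n. dist (g (j / n)) (g (Suc j / n))) \<le> B"
proof -
  obtain B where B: "\<And>n t. t 0 = 0 \<Longrightarrow> t n = 1 \<Longrightarrow> \<forall>i<n. t i \<le> t (Suc i) \<Longrightarrow>
      (\<Sum>i<n. dist (g (t i)) (g (t (Suc i)))) \<le> B"
    using assms unfolding finite_length_def by blast
  have "(\<Sum>j<n. dist (g (j / n)) (g (Suc j / n))) \<le> B" if "1 \<le> n" for n
    using that by (intro B[of "\<lambda>j. j / n"]) (auto simp: divide_right_mono)
  then show thesis by (rule that)
qed

lemma path_uniform_partition_fine:
  assumes "path g" and "0 < \<delta>"
  obtains n :: nat where "2 \<le> n" and "\<And>j. j < n \<Longrightarrow> dist (g (j / n)) (g (Suc j / n)) < \<delta>"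
proof -
  have "uniformly_continuous_on {0..1} g"
    using assms(1) unfolding path_def by (intro compact_uniformly_continuous) auto
  then obtain d where "0 < d"
    and d: "\<And>s t. s \<in> {0..1} \<Longrightarrow> t \<in> {0..1} \<Longrightarrow> dist t s < d \<Longrightarrow> dist (g t) (g s) < \<delta>"
    using assms(2) unfolding uniformly_continuous_on_def by metis
  define n where "n = nat \<lceil>1 / d\<rceil> + 2"
  have "2 \<le> n" by (simp add: n_def)
  have "1 / d < n"
    unfolding n_def by linarith
  then have "1 / n < d"
    using \<open>0 < d\<close> \<open>2 \<le> n\<close> by (simp add: field_simps)
  have "dist (g (Suc j / n)) (g (j / n)) < \<delta>" if "j < n" for j
  proof (rule d)
    show "j / n \<in> {0..1}" "Suc j / n \<in> {0..1}"
      using that by (auto simp: field_simps)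
    show "dist (Suc j / n) (j / n) < d"
      using \<open>1 / n < d\<close> \<open>2 \<le> n\<close> by (simp add: dist_real_def field_simps)
  qed
  then show thesis
    using that \<open>2 \<le> n\<close> by (metis dist_commute)
qed

lemma ereal_le_if_le_minus_mult:
  assumes "\<And>e. 0 < e \<Longrightarrow> ereal (a - e * B) \<le> S"
  shows "ereal a \<le> S"
proof (cases "0 < B")
  case True
  show ?thesis
  proof (rule ereal_le_epsilon2)
    fix e :: real
    assume "0 < e"
    then have "ereal a \<le> ereal (a - (e / B) * B) + ereal e"
      using True by simp
    also have "\<dots> \<le> S + ereal e"
      using assms[of "e / B"] \<open>0 < e\<close> True by (intro add_right_mono) simp
    finally show "ereal a \<le> S + ereal e" .
  qed
next
  case False
  then have "ereal a \<le> ereal (a - 1 * B)" by simp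
  also have "\<dots> \<le> S" by (rule assms) simp
  finally show ?thesis .
qed

lemma Ifun_add_ge_discrete_path:
  fixes z :: "nat \<Rightarrow> 'x" and T :: "'x \<Rightarrow> 'y"
  assumes "2 \<le> n" and on_\<Gamma>: "\<And>j. 0 < j \<Longrightarrow> j < n \<Longrightarrow> (z j, T (z j)) \<in> \<Gamma>"
  shows "ereal (c (z 0) (T (z n)) + c (z n) (T (z 0)) - c (z 0) (T (z 0)) - c (z n) (T (z n))
           + (\<Sum>j<n. c (z j) (T (z j)) + c (z (Suc j)) (T (z (Suc j)))
                     - c (z j) (T (z (Suc j))) - c (z (Suc j)) (T (z j))))
         \<le> Ifun c \<Gamma> (z 0) (T (z n)) + Ifun c \<Gamma> (z n) (T (z 0))"
proof -
  define w where "w j = T (z j)" for j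
  let ?F = "chain_gain c z w n" and ?R = "chain_gain c (\<lambda>j. z (n - j)) (\<lambda>j. w (n - j)) n"
  have "ereal ?F \<le> Ifun c \<Gamma> (z 0) (w n)"
    using \<open>2 \<le> n\<close> by (intro chain_gain_le_Ifun) (auto simp: w_def intro!: on_\<Gamma>)
  moreover have "ereal ?R \<le> Ifun c \<Gamma> (z n) (w 0)"
    using chain_gain_le_Ifun[OF \<open>2 \<le> n\<close>, of "\<lambda>j. z (n - j)" "\<lambda>j. w (n - j)" \<Gamma> c]
    by (simp add: w_def on_\<Gamma>)
  ultimately have "ereal ?F + ereal ?R \<le> Ifun c \<Gamma> (z 0) (w n) + Ifun c \<Gamma> (z n) (w 0)"
    by (rule add_mono)
  then show ?thesis
    using chain_gain_add_reverse[of n c z w] \<open>2 \<le> n\<close> by (simp add: w_def)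
qed

lemma Ifun_add_ge_along_path_up_to:
  fixes g :: "real \<Rightarrow> 'x::metric_space" and T :: "'x \<Rightarrow> 'y"
  assumes "path g" and "0 \<le> e" and "0 < \<delta>"
    and graph: "\<And>a. a \<in> path_image g \<Longrightarrow> (a, T a) \<in> \<Gamma>"
    and \<delta>: "\<And>x1 x2. x1 \<in> path_image g \<Longrightarrow> x2 \<in> path_image g \<Longrightarrow> dist x1 x2 < \<delta> \<Longrightarrow>
             \<bar>c x1 (T x1) + c x2 (T x2) - c x1 (T x2) - c x2 (T x1)\<bar> \<le> e * dist x1 x2"
    and B: "\<And>n::nat. 1 \<le> n \<Longrightarrow> (\<Sum>j<n. dist (g (j / n)) (g (Suc j / n))) \<le> B"
  defines "a \<equiv> pathstart g" and "b \<equiv> pathfinish g"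
  shows "ereal (c a (T b) + c b (T a) - c a (T a) - c b (T b) - e * B)
           \<le> Ifun c \<Gamma> a (T b) + Ifun c \<Gamma> b (T a)"
proof -
  obtain n :: nat where "2 \<le> n" and fine: "\<And>j. j < n \<Longrightarrow> dist (g (j / n)) (g (Suc j / n)) < \<delta>"
    using path_uniform_partition_fine[OF \<open>path g\<close> \<open>0 < \<delta>\<close>] by blast
  define z where "z j = g (j / n)" for j :: nat
  have z_on_path: "z j \<in> path_image g" if "j \<le> n" for j
    unfolding z_def path_image_def using that \<open>2 \<le> n\<close> by (auto simp: field_simps)
  have "z 0 = a" "z n = b"
    using \<open>2 \<le> n\<close> by (simp_all add: z_def a_def b_def pathstart_def pathfinish_def)
  have "- (e * dist (z j) (z (Suc j)))
      \<le> c (z j) (T (z j)) + c (z (Suc j)) (T (z (Suc j))) - c (z j) (T (z (Suc j))) - c (z (Suc j)) (T (z j))"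
    if "j < n" for j
  proof -
    have "\<bar>c (z j) (T (z j)) + c (z (Suc j)) (T (z (Suc j))) - c (z j) (T (z (Suc j)))
          - c (z (Suc j)) (T (z j))\<bar> \<le> e * dist (z j) (z (Suc j))"
      using that fine[OF that] by (intro \<delta> z_on_path) (auto simp: z_def)
    then show ?thesis by linarith
  qed
  then have "- (e * (\<Sum>j<n. dist (z j) (z (Suc j))))
      \<le> (\<Sum>j<n. c (z j) (T (z j)) + c (z (Suc j)) (T (z (Suc j)))
                - c (z j) (T (z (Suc j))) - c (z (Suc j)) (T (z j)))"
    by (simp add: sum_distrib_left flip: sum_negf) (rule sum_mono, simp)
  moreover have "e * (\<Sum>j<n. dist (z j) (z (Suc j))) \<le> e * B"
    using B \<open>0 \<le> e\<close> \<open>2 \<le> n\<close> by (simp add: z_def mult_left_mono)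
  ultimately have "ereal (c a (T b) + c b (T a) - c a (T a) - c b (T b) - e * B)
      \<le> ereal (c (z 0) (T (z n)) + c (z n) (T (z 0)) - c (z 0) (T (z 0)) - c (z n) (T (z n))
         + (\<Sum>j<n. c (z j) (T (z j)) + c (z (Suc j)) (T (z (Suc j)))
                   - c (z j) (T (z (Suc j))) - c (z (Suc j)) (T (z j))))"
    unfolding \<open>z 0 = a\<close> \<open>z n = b\<close> by simp
  also have "\<dots> \<le> Ifun c \<Gamma> (z 0) (T (z n)) + Ifun c \<Gamma> (z n) (T (z 0))"
    using \<open>2 \<le> n\<close> by (rule Ifun_add_ge_discrete_path) (simp add: graph z_on_path)
  finally show ?thesis
    unfolding \<open>z 0 = a\<close> \<open>z n = b\<close> .
qed

lemma Ifun_add_ge_along_path: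
  fixes g :: "real \<Rightarrow> 'x::metric_space" and T :: "'x \<Rightarrow> 'y"
  assumes "path g" and "finite_length g"
    and graph: "\<And>a. a \<in> path_image g \<Longrightarrow> (a, T a) \<in> \<Gamma>"
    and unif: "\<forall>e>0. \<exists>\<delta>>0. \<forall>x1\<in>path_image g. \<forall>x2\<in>path_image g. dist x1 x2 < \<delta> \<longrightarrow>
                 \<bar>c x1 (T x1) + c x2 (T x2) - c x1 (T x2) - c x2 (T x1)\<bar> \<le> e * dist x1 x2"
  defines "a \<equiv> pathstart g" and "b \<equiv> pathfinish g"
  shows "ereal (c a (T b) + c b (T a) - c a (T a) - c b (T b))
           \<le> Ifun c \<Gamma> a (T b) + Ifun c \<Gamma> b (T a)"
proof -
  obtain B where B: "\<And>n::nat. 1 \<le> n \<Longrightarrow> (\<Sum>j<n. dist (g (j / n)) (g (Suc j / n))) \<le> B"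
    using finite_length_uniform_partition[OF \<open>finite_length g\<close>] by blast
  show ?thesis
  proof (rule ereal_le_if_le_minus_mult)
    fix e :: real
    assume "0 < e"
    then obtain \<delta> where "0 < \<delta>" and "\<forall>x1\<in>path_image g. \<forall>x2\<in>path_image g. dist x1 x2 < \<delta> \<longrightarrow>
        \<bar>c x1 (T x1) + c x2 (T x2) - c x1 (T x2) - c x2 (T x1)\<bar> \<le> e * dist x1 x2"
      using unif by blast
    then show "ereal (c a (T b) + c b (T a) - c a (T a) - c b (T b) - e * B)
        \<le> Ifun c \<Gamma> a (T b) + Ifun c \<Gamma> b (T a)"
      unfolding a_def b_def using \<open>0 < e\<close>
      by (intro Ifun_add_ge_along_path_up_to[OF \<open>path g\<close>] graph B) auto
  qed
qed

theorem lemma4p10: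
  fixes \<mu> :: "'x::polish_space measure" and \<nu> :: "'y::polish_space measure"
    and c :: "'x \<Rightarrow> 'y \<Rightarrow> real"
    and \<pi> :: "real \<Rightarrow> ('x \<times> 'y) measure" and \<pi>s :: "('x \<times> 'y) measure"
    and T :: "'x \<Rightarrow> 'y"
    and x y x' y'
  assumes "prob_space \<mu>" and "sets \<mu> = sets borel"
    and "prob_space \<nu>" and "sets \<nu> = sets borel"
    and "continuous_on UNIV (\<lambda>z. c (fst z) (snd z))" and "\<And>a b. c a b \<ge> 0"
    and "\<And>\<epsilon>. \<epsilon> > 0 \<Longrightarrow> \<pi> \<epsilon> \<in> couplings \<mu> \<nu> \<and> cyc_invariant c \<epsilon> \<mu> \<nu> (\<pi> \<epsilon>)"
    and "\<pi>s \<in> couplings \<mu> \<nu>" and "weak_conv_at0 \<pi> \<pi>s"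
    and graph: "spt \<pi>s = {(a, T a) | a. a \<in> fst ` spt \<pi>s}"
    and arc: "\<forall>a \<in> fst ` spt \<pi>s. \<forall>b \<in> fst ` spt \<pi>s. \<exists>g. path g \<and> path_image g \<subseteq> fst ` spt \<pi>s
               \<and> pathstart g = a \<and> pathfinish g = b \<and> finite_length g"
    and unif: "\<And>K. compact K \<Longrightarrow> K \<subseteq> fst ` spt \<pi>s \<Longrightarrow>
               \<forall>e>0. \<exists>\<delta>>0. \<forall>x1\<in>K. \<forall>x2\<in>K. dist x1 x2 < \<delta> \<longrightarrow>
                 \<bar>c x1 (T x1) + c x2 (T x2) - c x1 (T x2) - c x2 (T x1)\<bar> \<le> e * dist x1 x2"
    and "x \<in> fst ` spt \<pi>s" and "x' \<in> fst ` spt \<pi>s"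
    and "y \<in> snd ` spt \<pi>s" and "y' \<in> snd ` spt \<pi>s"
    and "(x', y) \<in> spt \<pi>s" and "(x, y') \<in> spt \<pi>s"
  shows "Ifun c (spt \<pi>s) x y + Ifun c (spt \<pi>s) x' y'
           \<ge> ereal (c x y + c x' y' - c x y' - c x' y)"
proof -
  let ?\<Gamma> = "spt \<pi>s"
  have "y = T x'" and "y' = T x"
    using \<open>(x', y) \<in> ?\<Gamma>\<close> \<open>(x, y') \<in> ?\<Gamma>\<close> graph by auto
  obtain g where "path g" and g_in: "path_image g \<subseteq> fst ` ?\<Gamma>"
    and "pathstart g = x" and "pathfinish g = x'" and "finite_length g"
    using arc \<open>x \<in> fst ` ?\<Gamma>\<close> \<open>x' \<in> fst ` ?\<Gamma>\<close> by blast
  have "\<And>a. a \<in> path_image g \<Longrightarrow> (a, T a) \<in> ?\<Gamma>"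
    using g_in graph by blast
  moreover have "\<forall>e>0. \<exists>\<delta>>0. \<forall>x1\<in>path_image g. \<forall>x2\<in>path_image g. dist x1 x2 < \<delta> \<longrightarrow>
      \<bar>c x1 (T x1) + c x2 (T x2) - c x1 (T x2) - c x2 (T x1)\<bar> \<le> e * dist x1 x2"
    using unif[OF compact_path_image[OF \<open>path g\<close>] g_in] .
  ultimately show ?thesis
    using Ifun_add_ge_along_path[OF \<open>path g\<close> \<open>finite_length g\<close>, of T ?\<Gamma> c]
      \<open>pathstart g = x\<close> \<open>pathfinish g = x'\<close> \<open>y = T x'\<close> \<open>y' = T x\<close>
    by simp
qed

end
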